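(* Let $A$ be a commutative ring over $\mathbf F_p$ with an action of a cyclic group $\langle\sigma\rangle$ of order $p$, let $N\cdot A=\{(1+\sigma+\dots+\sigma^{p-1})a: a\in A\}$ and $\mathrm{Nm}(a)=a\,\sigma(a)\cdots\sigma^{p-1}(a)$. Let $A'\subset A^\sigma$ be a subring containing $\mathrm{Nm}(A)$ and $N\cdot A$ (so $N\cdot A$ is an ideal of $A'$). Then every ring homomorphism $\chi\colon A'\to k$ that vanishes on $N\cdot A$ extends uniquely to a ring homomorphism $\tilde\chi\colon A\to k$, and this extension is given by $\tilde\chi(a)=\chi(\mathrm{Nm}(a))^{1/p}$.
   Context: $k$ is an algebraic closure of $\mathbf F_p$ (so $p$-th roots are unique); $A^\sigma$ denotes the $\sigma$-invariants of $A$. *)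

theory Defs
  imports "HOL-Computational_Algebra.Computational_Algebra"
begin

definition ring_hom_on :: "'a::comm_ring_1 set \<Rightarrow> ('a \<Rightarrow> 'b::comm_ring_1) \<Rightarrow> bool" where
  "ring_hom_on S f \<longleftrightarrow> f 1 = 1 \<and>
     (\<forall>x\<in>S. \<forall>y\<in>S. f (x + y) = f x + f y \<and> f (x * y) = f x * f y)"

definition is_subring :: "'a::comm_ring_1 set \<Rightarrow> bool" where
  "is_subring S \<longleftrightarrow> 0 \<in> S \<and> 1 \<in> S \<and>
     (\<forall>x\<in>S. \<forall>y\<in>S. x + y \<in> S \<and> x - y \<in> S \<and> x * y \<in> S)"

definition cyclic_action :: "nat \<Rightarrow> ('a::comm_ring_1 \<Rightarrow> 'a) \<Rightarrow> bool" where
  "cyclic_action p \<sigma> \<longleftrightarrow> bij \<sigma> \<and> \<sigma> 1 = 1 \<and>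
     (\<forall>x y. \<sigma> (x + y) = \<sigma> x + \<sigma> y \<and> \<sigma> (x * y) = \<sigma> x * \<sigma> y) \<and>
     (\<sigma> ^^ p) = id"

definition trace_N :: "nat \<Rightarrow> ('a::comm_ring_1 \<Rightarrow> 'a) \<Rightarrow> 'a \<Rightarrow> 'a" where
  "trace_N p \<sigma> a = (\<Sum>i<p. (\<sigma> ^^ i) a)"

definition Nm :: "nat \<Rightarrow> ('a::comm_ring_1 \<Rightarrow> 'a) \<Rightarrow> 'a \<Rightarrow> 'a" where
  "Nm p \<sigma> a = (\<Prod>i<p. (\<sigma> ^^ i) a)"

definition alg_closure_of_Fp :: "nat \<Rightarrow> 'k::alg_closed_field itself \<Rightarrow> bool" where
  "alg_closure_of_Fp p _ \<longleftrightarrow> of_nat p = (0::'k) \<and>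
     (\<forall>x::'k. \<exists>q::'k poly. q \<noteq> 0 \<and> (\<forall>i. coeff q i \<in> range of_nat) \<and> poly q x = 0)"

definition pth_root :: "nat \<Rightarrow> 'k::field \<Rightarrow> 'k" where
  "pth_root p y = (THE x. x ^ p = y)"

end

theory Submission
  imports Defs "HOL-Number_Theory.Cong"
begin

text \<open>
  Any extension \<open>\<psi>\<close> must satisfy \<open>\<psi>(a)^p = \<chi>(Nm a)\<close>: the element \<open>a\<close> is a
  root of \<open>\<Prod>\<^sub>i (X - \<sigma>\<^sup>i a)\<close>, whose coefficients other than the leading and
  constant ones are traces and hence are killed by \<open>\<psi>\<close>. Since Frobenius is
  bijective on \<open>k\<close>, everything reduces to showing that \<open>a \<mapsto> \<chi>(Nm a)\<close> is a ring
  homomorphism, and only additivity is not obvious. Expanding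
  \<open>Nm(a + b) = \<Prod>\<^sub>i (\<sigma>\<^sup>i a + \<sigma>\<^sup>i b)\<close> over subsets \<open>S\<close> of \<open>\<int>/p\<close>, the sum of
  the terms with \<open>|S| = k\<close>, \<open>0 < k < p\<close>, is a trace: the trace of the partial
  sum over the \<open>S \<ni> 0\<close> counts every term \<open>k\<close> times, and \<open>k\<close> is invertible
  mod \<open>p\<close>.
\<close>

lemma ring_hom_on_UNIV_simps:
  fixes f :: "'a::comm_ring_1 \<Rightarrow> 'b::comm_ring_1"
  assumes "ring_hom_on UNIV f"
  shows "f 1 = 1" "f (x + y) = f x + f y" "f (x * y) = f x * f y"
    and "f 0 = 0" "f (- x) = - f x" "f (x ^ n) = f x ^ n" "f (of_nat n) = of_nat n"
    and "f (sum g A) = (\<Sum>a\<in>A. f (g a))" "f (prod g A) = (\<Prod>a\<in>A. f (g a))"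
proof -
  show one: "f 1 = 1"
    and add: "\<And>x y. f (x + y) = f x + f y" and mult: "\<And>x y. f (x * y) = f x * f y"
    using assms unfolding ring_hom_on_def by auto
  show zero: "f 0 = 0"
    using add[of 0 0] by simp
  show "f (- x) = - f x"
    using add[of x "- x"] by (simp add: zero eq_neg_iff_add_eq_0 add.commute)
  show "f (x ^ n) = f x ^ n"
    by (induction n) (simp_all add: one mult)
  show "f (of_nat n) = of_nat n"
    by (induction n) (simp_all add: zero one add)
  show "f (sum g A) = (\<Sum>a\<in>A. f (g a))"
    by (induction A rule: infinite_finite_induct) (simp_all add: zero add)
  show "f (prod g A) = (\<Prod>a\<in>A. f (g a))"
    by (induction A rule: infinite_finite_induct) (simp_all add: one mult)
qed

lemma ring_hom_on_UNIV_comp: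
  "ring_hom_on UNIV f \<Longrightarrow> ring_hom_on UNIV g \<Longrightarrow> ring_hom_on UNIV (g \<circ> f)"
  by (simp add: ring_hom_on_def)

lemma ring_hom_on_UNIV_funpow:
  fixes f :: "'a::comm_ring_1 \<Rightarrow> 'a"
  shows "ring_hom_on UNIV f \<Longrightarrow> ring_hom_on UNIV (f ^^ n)"
  by (induction n) (auto simp: ring_hom_on_def)

lemma ring_hom_on_power:
  assumes "is_subring S" "ring_hom_on S f" "x \<in> S"
  shows "x ^ n \<in> S \<and> f (x ^ n) = f x ^ n"
  using assms by (induction n) (simp_all add: is_subring_def ring_hom_on_def)

lemma CHAR_eq_prime:
  assumes "prime p" "of_nat p = (0::'a::{semiring_1,zero_neq_one})"
  shows "CHAR('a) = p"
  using assms by (metis CHAR_not_1 One_nat_def of_nat_eq_0_iff_char_dvd prime_nat_iff)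

context
  fixes p :: nat
  assumes prime: "prime p" and char: "CHAR('k::field) = p"
begin

lemma power_prime_char_inj:
  fixes x y :: 'k
  assumes "x ^ p = y ^ p"
  shows "x = y"
proof -
  have "x ^ p = ((x - y) + y) ^ p"
    by simp
  also have "\<dots> = (x - y) ^ p + y ^ p"
    by (rule freshmans_dream) (use prime char in auto)
  finally have "x ^ p = (x - y) ^ p + y ^ p" .
  then have "(x - y) ^ p = 0"
    using assms by simp
  then show ?thesis
    by simp
qed

lemma pth_root_eqI:
  fixes x y :: 'k
  assumes "x ^ p = y"
  shows "pth_root p y = x"
  unfolding pth_root_def
  using assms power_prime_char_inj by (intro the_equality) auto

end

lemma pth_root_power:
  fixes y :: "'k::alg_closed_field"
  assumes "prime p" "CHAR('k) = p"
  shows "pth_root p y ^ p = y"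
proof -
  obtain x :: 'k where x: "x ^ p = y"
    using nth_root_exists[of p y] assms prime_gt_0_nat by blast
  then have "pth_root p y = x"
    by (rule pth_root_eqI[OF assms])
  with x show ?thesis
    by simp
qed

lemma ring_hom_on_UNIV_pth_root:
  assumes "prime p" "CHAR('k::alg_closed_field) = p"
  shows "ring_hom_on UNIV (pth_root p :: 'k \<Rightarrow> 'k)"
  unfolding ring_hom_on_def
proof (intro conjI ballI)
  show "pth_root p 1 = (1::'k)"
    by (rule pth_root_eqI[OF assms]) simp
  fix x y :: 'k
  show "pth_root p (x + y) = pth_root p x + pth_root p y"
    by (rule pth_root_eqI[OF assms])
      (simp add: freshmans_dream[OF _ assms(2)[symmetric]] assms pth_root_power)
  show "pth_root p (x * y) = pth_root p x * pth_root p y"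
    by (rule pth_root_eqI[OF assms]) (simp add: power_mult_distrib assms pth_root_power)
qed

lemma prod_add_by_card:
  fixes f g :: "'b \<Rightarrow> 'a::comm_semiring_1"
  assumes "finite A" "A \<noteq> {}"
  shows "(\<Prod>x\<in>A. f x + g x) = prod f A + prod g A +
    (\<Sum>k\<in>{0<..<card A}. \<Sum>S | S \<subseteq> A \<and> card S = k. prod f S * prod g (A - S))"
proof -
  let ?h = "\<lambda>S. prod f S * prod g (A - S)"
  let ?layer = "\<lambda>k. \<Sum>S | S \<subseteq> A \<and> card S = k. ?h S"
  have card_A: "card A > 0"
    using assms by (simp add: card_gt_0_iff)
  have "(\<Prod>x\<in>A. f x + g x) = (\<Sum>S\<in>Pow A. ?h S)"
    by (rule prod_add) (fact assms)
  also have "\<dots> = (\<Sum>k\<in>{..card A}. ?layer k)"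
    using assms(1) by (subst sum.group[symmetric, where g = card and T = "{..card A}"])
      (auto intro!: card_mono sum.cong)
  also have "{..card A} = insert 0 (insert (card A) {0<..<card A})"
    using card_A by auto
  also have "(\<Sum>k\<in>\<dots>. ?layer k) = ?layer 0 + ?layer (card A) + (\<Sum>k\<in>{0<..<card A}. ?layer k)"
    using card_A by (simp add: add.assoc)
  also have "{S. S \<subseteq> A \<and> card S = 0} = {{}}"
    using assms(1) by (auto dest: finite_subset)
  also have "{S. S \<subseteq> A \<and> card S = card A} = {A}"
    using assms(1) by (auto dest: card_subset_eq)
  finally show ?thesis
    by (simp add: add.commute)
qed

lemma bij_betw_image_card_subsets:
  assumes "bij_betw f A A"
  shows "bij_betw ((`) f) {S. S \<subseteq> A \<and> card S = k} {S. S \<subseteq> A \<and> card S = k}"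
proof (rule bij_betw_subset[OF bij_betw_image_Pow[OF assms]])
  have inj: "inj_on f A" and surj: "f ` A = A"
    using assms by (auto simp: bij_betw_def)
  show "(`) f ` {S. S \<subseteq> A \<and> card S = k} = {S. S \<subseteq> A \<and> card S = k}"
  proof (intro equalityI subsetI)
    fix U assume "U \<in> (`) f ` {S. S \<subseteq> A \<and> card S = k}"
    then show "U \<in> {S. S \<subseteq> A \<and> card S = k}"
      using inj surj by (auto simp: card_image inj_on_subset)
  next
    fix U assume U: "U \<in> {S. S \<subseteq> A \<and> card S = k}"
    then have "U = f ` (inv_into A f ` U)" "inv_into A f ` U \<subseteq> A"
      using surj by (auto simp: image_inv_into_cancel inv_into_into)
    moreover have "card (inv_into A f ` U) = card U"
      using U surj by (intro card_image inj_on_inv_into) auto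
    ultimately show "U \<in> (`) f ` {S. S \<subseteq> A \<and> card S = k}"
      using U by auto
  qed
qed auto

lemma of_nat_invertible_prime_char:
  assumes "prime p" "of_nat p = (0::'a::comm_ring_1)" "\<not> p dvd k"
  shows "\<exists>m. of_nat m * of_nat k = (1::'a)"
proof -
  have "coprime k p"
    using assms(1,3) prime_imp_coprime coprime_commute by blast
  then obtain m where "[k * m = 1] (mod p)"
    using cong_solve_coprime_nat by auto
  moreover have "CHAR('a) dvd p"
    using assms(2) by (simp add: of_nat_eq_0_iff_char_dvd)
  ultimately have "[k * m = 1] (mod CHAR('a))"
    by (rule cong_dvd_modulus_nat)
  then have "of_nat (k * m) = (of_nat 1 :: 'a)"
    by (simp only: of_nat_eq_iff_cong_CHAR)
  then show ?thesis
    by (auto simp: mult.commute)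
qed

locale cyclic_char_p =
  fixes p :: nat and \<sigma> :: "'a::comm_ring_1 \<Rightarrow> 'a"
  assumes prime: "prime p" and char: "of_nat p = (0::'a)"
    and hom: "ring_hom_on UNIV \<sigma>" and period: "\<sigma> ^^ p = id"
begin

lemma p_pos: "p > 0"
  using prime prime_gt_0_nat by blast

lemmas funpow_simps = ring_hom_on_UNIV_simps[OF ring_hom_on_UNIV_funpow[OF hom]]

definition shift :: "nat \<Rightarrow> nat \<Rightarrow> nat" where
  "shift j i = (i + j) mod p"

lemma funpow_funpow_shift: "(\<sigma> ^^ j) ((\<sigma> ^^ i) x) = (\<sigma> ^^ shift j i) x"
proof -
  have "(\<sigma> ^^ j) ((\<sigma> ^^ i) x) = (\<sigma> ^^ (i + j)) x"
    by (simp add: funpow_add add.commute[of i j])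
  also have "\<dots> = (\<sigma> ^^ shift j i) x"
    using funpow_mod_eq[where f = \<sigma> and n = p and m = "i + j"] by (simp add: shift_def period)
  finally show ?thesis .
qed

lemma bij_betw_shift: "bij_betw (shift j) {..<p} {..<p}"
proof -
  have "inj_on (shift j) {..<p}"
  proof (rule inj_onI)
    fix i i' assume "i \<in> {..<p}" "i' \<in> {..<p}" "shift j i = shift j i'"
    then show "i = i'"
      unfolding shift_def
      by (metis cong_add_rcancel_nat cong_def cong_less_modulus_unique_nat lessThan_iff)
  qed
  moreover have "shift j ` {..<p} \<subseteq> {..<p}"
    using p_pos by (auto simp: shift_def)
  ultimately show ?thesis
    by (simp add: bij_betw_def endo_inj_surj)
qed

lemma funpow_orbit_prod:
  assumes "S \<subseteq> {..<p}"
  shows "(\<sigma> ^^ j) (\<Prod>i\<in>S. (\<sigma> ^^ i) a) = (\<Prod>i\<in>shift j ` S. (\<sigma> ^^ i) a)"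
proof -
  have "inj_on (shift j) S"
    using bij_betw_shift assms by (auto simp: bij_betw_def intro: inj_on_subset)
  then show ?thesis
    by (simp add: funpow_simps funpow_funpow_shift prod.reindex)
qed

lemma trace_N_sum: "trace_N p \<sigma> (sum f A) = (\<Sum>a\<in>A. trace_N p \<sigma> (f a))"
  unfolding trace_N_def funpow_simps by (rule sum.swap)

lemma trace_N_mult_invariant:
  assumes "\<sigma> c = c"
  shows "trace_N p \<sigma> (c * x) = c * trace_N p \<sigma> x"
proof -
  have "(\<sigma> ^^ i) c = c" for i
    by (induction i) (simp_all add: assms)
  then show ?thesis
    by (simp add: trace_N_def funpow_simps sum_distrib_left)
qed

lemma sum_card_subsets_in_trace_image:
  assumes equivariant: "\<And>j S. j < p \<Longrightarrow> S \<subseteq> {..<p} \<Longrightarrow> (\<sigma> ^^ j) (F S) = F (shift j ` S)"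
    and k: "0 < k" "k < p"
  shows "(\<Sum>S | S \<subseteq> {..<p} \<and> card S = k. F S) \<in> range (trace_N p \<sigma>)"
proof -
  define P where "P = {S. S \<subseteq> {..<p} \<and> card S = k}"
  define z where "z = (\<Sum>S\<in>P. if 0 \<in> S then F S else 0)"
  have shift_mem_iff: "j \<in> shift j ` S \<longleftrightarrow> 0 \<in> S" if "j < p" "S \<subseteq> {..<p}" for j S
  proof -
    have "shift j 0 = j"
      using that by (simp add: shift_def)
    moreover have "inj_on (shift j) {..<p}"
      using bij_betw_shift by (auto simp: bij_betw_def)
    ultimately show ?thesis
      using that p_pos by (metis inj_on_image_mem_iff lessThan_iff)
  qed
  have "trace_N p \<sigma> z = (\<Sum>j<p. \<Sum>S\<in>P. if 0 \<in> S then F (shift j ` S) else 0)"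
    unfolding trace_N_def z_def funpow_simps
    by (intro sum.cong refl) (auto simp: P_def equivariant funpow_simps)
  also have "\<dots> = (\<Sum>j<p. \<Sum>U\<in>P. if j \<in> U then F U else 0)"
  proof (rule sum.cong[OF refl])
    fix j assume "j \<in> {..<p}"
    then show "(\<Sum>S\<in>P. if 0 \<in> S then F (shift j ` S) else 0) = (\<Sum>U\<in>P. if j \<in> U then F U else 0)"
      using sum.reindex_bij_betw[OF bij_betw_image_card_subsets[OF bij_betw_shift],
          of "\<lambda>U. if j \<in> U then F U else 0" j k]
      by (auto simp: P_def shift_mem_iff intro!: sum.cong)
  qed
  also have "\<dots> = (\<Sum>U\<in>P. \<Sum>j<p. if j \<in> U then F U else 0)"
    by (rule sum.swap)
  also have "\<dots> = (\<Sum>U\<in>P. of_nat k * F U)"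
  proof (rule sum.cong[OF refl])
    fix U assume "U \<in> P"
    then have "{..<p} \<inter> U = U" "card U = k"
      by (auto simp: P_def)
    then show "(\<Sum>j<p. if j \<in> U then F U else 0) = of_nat k * F U"
      by (simp add: sum.If_cases)
  qed
  finally have trace_z: "trace_N p \<sigma> z = of_nat k * (\<Sum>U\<in>P. F U)"
    by (simp add: sum_distrib_left)
  have "\<not> p dvd k"
    using k by (auto dest: dvd_imp_le)
  then obtain m where m: "of_nat m * of_nat k = (1::'a)"
    using of_nat_invertible_prime_char[OF prime char] by blast
  have "trace_N p \<sigma> (of_nat m * z) = of_nat m * trace_N p \<sigma> z"
    by (rule trace_N_mult_invariant) (simp add: ring_hom_on_UNIV_simps[OF hom])
  also have "\<dots> = (\<Sum>U\<in>P. F U)"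
    by (simp add: trace_z m flip: mult.assoc)
  finally have "trace_N p \<sigma> (of_nat m * z) = (\<Sum>U\<in>P. F U)" .
  then show ?thesis
    unfolding P_def by (metis rangeI)
qed

lemma mixed_orbit_layers_eq_trace:
  "\<exists>y. \<forall>k\<in>{0<..<p}. (\<Sum>S | S \<subseteq> {..<p} \<and> card S = k.
      (\<Prod>i\<in>S. (\<sigma> ^^ i) a) * (\<Prod>i\<in>{..<p} - S. (\<sigma> ^^ i) b)) = trace_N p \<sigma> (y k)"
proof -
  have "(\<Sum>S | S \<subseteq> {..<p} \<and> card S = k.
      (\<Prod>i\<in>S. (\<sigma> ^^ i) a) * (\<Prod>i\<in>{..<p} - S. (\<sigma> ^^ i) b)) \<in> range (trace_N p \<sigma>)"
    if k: "k \<in> {0<..<p}" for k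
  proof (rule sum_card_subsets_in_trace_image)
    fix j S assume S: "S \<subseteq> {..<p}"
    have "inj_on (shift j) {..<p}" "shift j ` {..<p} = {..<p}"
      using bij_betw_shift[of j] by (auto simp: bij_betw_def)
    then have "shift j ` ({..<p} - S) = {..<p} - shift j ` S"
      using inj_on_image_set_diff[of "shift j" "{..<p}" "{..<p}" S] S by simp
    then show "(\<sigma> ^^ j) ((\<Prod>i\<in>S. (\<sigma> ^^ i) a) * (\<Prod>i\<in>{..<p} - S. (\<sigma> ^^ i) b)) =
        (\<Prod>i\<in>shift j ` S. (\<sigma> ^^ i) a) * (\<Prod>i\<in>{..<p} - shift j ` S. (\<sigma> ^^ i) b)"
      using S by (simp add: funpow_simps(3) funpow_orbit_prod)
  qed (use k in auto)
  then have "\<forall>k\<in>{0<..<p}. \<exists>y. (\<Sum>S | S \<subseteq> {..<p} \<and> card S = k.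
      (\<Prod>i\<in>S. (\<sigma> ^^ i) a) * (\<Prod>i\<in>{..<p} - S. (\<sigma> ^^ i) b)) = trace_N p \<sigma> y"
    by (auto simp: image_iff)
  then show ?thesis
    by (rule bchoice)
qed

lemma Nm_add: "\<exists>y. Nm p \<sigma> (a + b) = Nm p \<sigma> a + Nm p \<sigma> b + trace_N p \<sigma> y"
proof -
  let ?layer = "\<lambda>k. \<Sum>S | S \<subseteq> {..<p} \<and> card S = k.
      (\<Prod>i\<in>S. (\<sigma> ^^ i) a) * (\<Prod>i\<in>{..<p} - S. (\<sigma> ^^ i) b)"
  obtain y where y: "\<forall>k\<in>{0<..<p}. ?layer k = trace_N p \<sigma> (y k)"
    using mixed_orbit_layers_eq_trace by blast
  have "Nm p \<sigma> (a + b) = (\<Prod>i<p. (\<sigma> ^^ i) a + (\<sigma> ^^ i) b)"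
    by (simp add: Nm_def funpow_simps)
  also have "\<dots> = Nm p \<sigma> a + Nm p \<sigma> b + (\<Sum>k\<in>{0<..<p}. ?layer k)"
    using prod_add_by_card[of "{..<p}" "\<lambda>i. (\<sigma> ^^ i) a" "\<lambda>i. (\<sigma> ^^ i) b"] p_pos
    by (simp add: Nm_def lessThan_empty_iff)
  also have "\<dots> = Nm p \<sigma> a + Nm p \<sigma> b + trace_N p \<sigma> (\<Sum>k\<in>{0<..<p}. y k)"
    by (simp add: y trace_N_sum)
  finally show ?thesis ..
qed

lemma Nm_mult: "Nm p \<sigma> (a * b) = Nm p \<sigma> a * Nm p \<sigma> b"
  by (simp add: Nm_def funpow_simps prod.distrib)

lemma Nm_one: "Nm p \<sigma> 1 = 1"
  by (simp add: Nm_def funpow_simps)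

lemma Nm_invariant:
  assumes "\<sigma> a = a"
  shows "Nm p \<sigma> a = a ^ p"
proof -
  have "(\<sigma> ^^ i) a = a" for i
    by (induction i) (simp_all add: assms)
  then show ?thesis
    by (simp add: Nm_def)
qed

lemma orbit_polynomial:
  "\<exists>y. (\<Prod>i<p. (\<sigma> ^^ i) a + c) =
    Nm p \<sigma> a + c ^ p + (\<Sum>k\<in>{0<..<p}. trace_N p \<sigma> (y k) * c ^ (p - k))"
proof -
  let ?layer = "\<lambda>k. \<Sum>S | S \<subseteq> {..<p} \<and> card S = k. \<Prod>i\<in>S. (\<sigma> ^^ i) a"
  have "\<exists>y. \<forall>k\<in>{0<..<p}. ?layer k = trace_N p \<sigma> (y k)"
    using mixed_orbit_layers_eq_trace[where b = 1] by (simp add: funpow_simps)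
  then obtain y where y: "\<forall>k\<in>{0<..<p}. ?layer k = trace_N p \<sigma> (y k)"
    by blast
  have "(\<Prod>i<p. (\<sigma> ^^ i) a + c) = Nm p \<sigma> a + c ^ p +
      (\<Sum>k\<in>{0<..<p}. \<Sum>S | S \<subseteq> {..<p} \<and> card S = k.
        (\<Prod>i\<in>S. (\<sigma> ^^ i) a) * c ^ card ({..<p} - S))"
    using prod_add_by_card[of "{..<p}" "\<lambda>i. (\<sigma> ^^ i) a" "\<lambda>_. c"] p_pos
    by (simp add: Nm_def lessThan_empty_iff)
  also have "\<dots> = Nm p \<sigma> a + c ^ p + (\<Sum>k\<in>{0<..<p}. ?layer k * c ^ (p - k))"
    by (auto simp: sum_distrib_right card_Diff_subset finite_subset intro!: sum.cong)
  also have "\<dots> = Nm p \<sigma> a + c ^ p + (\<Sum>k\<in>{0<..<p}. trace_N p \<sigma> (y k) * c ^ (p - k))"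
    by (simp add: y)
  finally show ?thesis
    by blast
qed

end

locale norm_character = cyclic_char_p p \<sigma> for p and \<sigma> :: "'a::comm_ring_1 \<Rightarrow> 'a" +
  fixes A' :: "'a set" and \<chi> :: "'a \<Rightarrow> 'k::comm_ring_1"
  assumes subring: "is_subring A'"
    and Nm_mem: "Nm p \<sigma> a \<in> A'" and trace_mem: "trace_N p \<sigma> a \<in> A'"
    and hom_on: "ring_hom_on A' \<chi>" and trace_vanish: "\<chi> (trace_N p \<sigma> a) = 0"
begin

lemma ring_hom_on_UNIV_comp_Nm: "ring_hom_on UNIV (\<chi> \<circ> Nm p \<sigma>)"
  unfolding ring_hom_on_def
proof (intro conjI ballI)
  have add: "\<chi> (x + y) = \<chi> x + \<chi> y" and mult: "\<chi> (x * y) = \<chi> x * \<chi> y"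
    if "x \<in> A'" "y \<in> A'" for x y
    using hom_on that by (auto simp: ring_hom_on_def)
  have closed: "x + y \<in> A'" if "x \<in> A'" "y \<in> A'" for x y
    using subring that by (simp add: is_subring_def)
  show "(\<chi> \<circ> Nm p \<sigma>) 1 = 1"
    using hom_on by (simp add: Nm_one ring_hom_on_def)
  fix a b :: 'a
  obtain y where "Nm p \<sigma> (a + b) = Nm p \<sigma> a + Nm p \<sigma> b + trace_N p \<sigma> y"
    using Nm_add by blast
  then show "(\<chi> \<circ> Nm p \<sigma>) (a + b) = (\<chi> \<circ> Nm p \<sigma>) a + (\<chi> \<circ> Nm p \<sigma>) b"
    by (simp add: add closed Nm_mem trace_mem trace_vanish)
  show "(\<chi> \<circ> Nm p \<sigma>) (a * b) = (\<chi> \<circ> Nm p \<sigma>) a * (\<chi> \<circ> Nm p \<sigma>) b"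
    by (simp add: Nm_mult mult Nm_mem)
qed

lemma character_Nm_invariant:
  assumes "x \<in> A'" "\<sigma> x = x"
  shows "\<chi> (Nm p \<sigma> x) = \<chi> x ^ p"
  using ring_hom_on_power[OF subring hom_on assms(1)] by (simp add: Nm_invariant assms(2))

lemma extension_power_eq_Nm:
  assumes "CHAR('k) = p" "ring_hom_on UNIV \<psi>" "\<forall>x\<in>A'. \<psi> x = \<chi> x"
  shows "\<psi> a ^ p = \<chi> (Nm p \<sigma> a)"
proof -
  obtain y where y: "(\<Prod>i<p. (\<sigma> ^^ i) a + - a) =
      Nm p \<sigma> a + (- a) ^ p + (\<Sum>k\<in>{0<..<p}. trace_N p \<sigma> (y k) * (- a) ^ (p - k))"
    using orbit_polynomial by blast
  have "0 = (\<Prod>i<p. (\<sigma> ^^ i) a + - a)"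
    using p_pos by (intro prod_zero[symmetric]) (auto intro!: bexI[of _ 0])
  also note y
  finally have "\<psi> 0 = \<psi> (Nm p \<sigma> a + (- a) ^ p + (\<Sum>k\<in>{0<..<p}. trace_N p \<sigma> (y k) * (- a) ^ (p - k)))"
    by (rule arg_cong)
  also have "\<dots> = \<chi> (Nm p \<sigma> a) - \<psi> a ^ p"
    using minus_power_prime_CHAR[OF assms(1)[symmetric] prime]
    by (simp add: ring_hom_on_UNIV_simps[OF assms(2)] assms(3) Nm_mem trace_mem trace_vanish)
  finally show ?thesis
    by (simp add: ring_hom_on_UNIV_simps[OF assms(2)])
qed

end

theorem lemma5p16:
  fixes p :: nat
    and \<sigma> :: "'a::comm_ring_1 \<Rightarrow> 'a"
    and A' :: "'a set"
    and \<chi> :: "'a \<Rightarrow> 'k::alg_closed_field"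
  assumes "prime p"
    and "of_nat p = (0::'a)"
    and "alg_closure_of_Fp p TYPE('k)"
    and "cyclic_action p \<sigma>"
    and "is_subring A'"
    and "A' \<subseteq> {a. \<sigma> a = a}"
    and "\<forall>a. Nm p \<sigma> a \<in> A'"
    and "\<forall>a. trace_N p \<sigma> a \<in> A'"
    and "ring_hom_on A' \<chi>"
    and "\<forall>a. \<chi> (trace_N p \<sigma> a) = 0"
  shows "ring_hom_on UNIV (\<lambda>a. pth_root p (\<chi> (Nm p \<sigma> a)))
     \<and> (\<forall>x\<in>A'. pth_root p (\<chi> (Nm p \<sigma> x)) = \<chi> x)
     \<and> (\<forall>\<psi> :: 'a \<Rightarrow> 'k. ring_hom_on UNIV \<psi> \<and> (\<forall>x\<in>A'. \<psi> x = \<chi> x)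
          \<longrightarrow> \<psi> = (\<lambda>a. pth_root p (\<chi> (Nm p \<sigma> a))))"
proof -
  interpret norm_character p \<sigma> A' \<chi>
    using assms(1,2,4,5,7-10) by unfold_locales (auto simp: cyclic_action_def ring_hom_on_def)
  have char_k: "CHAR('k) = p"
    using assms(1,3) by (simp add: alg_closure_of_Fp_def CHAR_eq_prime)
  note root_eqI = pth_root_eqI[OF assms(1) char_k]
  have "ring_hom_on UNIV (pth_root p \<circ> (\<chi> \<circ> Nm p \<sigma>))"
    by (intro ring_hom_on_UNIV_comp ring_hom_on_UNIV_comp_Nm ring_hom_on_UNIV_pth_root assms(1) char_k)
  moreover have "pth_root p (\<chi> (Nm p \<sigma> x)) = \<chi> x" if "x \<in> A'" for x
  proof (rule root_eqI)
    show "\<chi> x ^ p = \<chi> (Nm p \<sigma> x)"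
      using that assms(6) character_Nm_invariant by auto
  qed
  moreover have "\<psi> = (\<lambda>a. pth_root p (\<chi> (Nm p \<sigma> a)))"
    if "ring_hom_on UNIV \<psi>" "\<forall>x\<in>A'. \<psi> x = \<chi> x" for \<psi> :: "'a \<Rightarrow> 'k"
  proof
    fix a
    show "\<psi> a = pth_root p (\<chi> (Nm p \<sigma> a))"
      using extension_power_eq_Nm[OF char_k that] by (rule root_eqI[symmetric])
  qed
  ultimately show ?thesis
    unfolding comp_def by blast
qed

end
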